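(* Let $L \in \mathbb{N}$, $q \in [1,\infty]$, $c > 0$, and $N_0,\dots,N_L \in \mathbb{N}$. Then every $R(\Phi) \in \mathcal{H}_{(N_0,\dots,N_L),c}^q$ satisfies \[ \mathrm{Lip}_{\ell^2} ( R(\Phi) ) \leq \begin{cases} c^{L} & \text{if } q \leq 2, \\ c^{L} \cdot (\sqrt{N_0 N_L} \cdot N_{1} \cdots N_{L-1})^{1 - 2 / q} & \text{if } q \geq 2 . \end{cases} \]
   Context: $\varrho(x)=\max\{0,x\}$ componentwise. For $\Phi=((W^i,b^i))_{i=1}^L$, $W^i\in\mathbb{R}^{N_i\times N_{i-1}}$, $b^i\in\mathbb{R}^{N_i}$, the realization $R(\Phi):\mathbb{R}^{N_0}\to\mathbb{R}^{N_L}$ is $R(\Phi)(x)=x^L$ with $x^0=x$, $x^i=\varrho(W^ix^{i-1}+b^i)$ for $1\le i\le L-1$, $x^L=W^Lx^{L-1}+b^L$. For matrices/vectors $\|\cdot\|_{\ell^q}$ is the entrywise $\ell^q$ norm (max absolute entry for $q=\infty$), $\|\Phi\|_{\ell^q}=\max_i\max\{\|W^i\|_{\ell^q},\|b^i\|_{\ell^q}\}$, and $\mathcal{H}^q_{(N_0,\dots,N_L),c}=\{R(\Phi):\|\Phi\|_{\ell^q}\le c\}$. For $f:\mathbb{R}^d\to\mathbb{R}^k$, $\mathrm{Lip}_{\ell^2}(f)=\sup_{x\ne y}\|f(x)-f(y)\|_{\ell^2}/\|x-y\|_{\ell^2}$. For $q=\infty$, $2/q=0$. *)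

theory Defs
  imports "HOL-Analysis.Analysis"
begin

text \<open>Vectors in R^n are represented as functions nat => real, where only the
coordinates 0..n-1 are meaningful; the space R^n is the set of such functions
vanishing outside {..<n}.  Matrices W in R^(m x n) are functions nat => nat => real
(row, column), of which only entries with row < m, column < n are meaningful.
A network Phi = ((W^i,b^i)), i = 1..L, is given by W :: nat => nat => nat => real
(layer, row, column) and b :: nat => nat => real (layer, row), with widths N 0, ..., N L.\<close>

definition vecspace :: "nat \<Rightarrow> (nat \<Rightarrow> real) set" where
  "vecspace n = {x. \<forall>i\<ge>n. x i = 0}"

definition relu :: "real \<Rightarrow> real" where
  "relu t = max 0 t"

definition affine_map :: "(nat \<Rightarrow> nat \<Rightarrow> real) \<Rightarrow> (nat \<Rightarrow> real) \<Rightarrow> nat \<Rightarrow> nat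
    \<Rightarrow> (nat \<Rightarrow> real) \<Rightarrow> (nat \<Rightarrow> real)" where
  "affine_map A v n m x = (\<lambda>i. if i < m then (\<Sum>j<n. A i j * x j) + v i else 0)"

fun nn_state :: "nat \<Rightarrow> (nat \<Rightarrow> nat) \<Rightarrow> (nat \<Rightarrow> nat \<Rightarrow> nat \<Rightarrow> real) \<Rightarrow> (nat \<Rightarrow> nat \<Rightarrow> real)
    \<Rightarrow> (nat \<Rightarrow> real) \<Rightarrow> nat \<Rightarrow> (nat \<Rightarrow> real)" where
  "nn_state L Ns W b x 0 = (\<lambda>i. if i < Ns 0 then x i else 0)"
| "nn_state L Ns W b x (Suc k) =
     (let z = affine_map (W (Suc k)) (b (Suc k)) (Ns k) (Ns (Suc k)) (nn_state L Ns W b x k)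
      in if Suc k < L then (\<lambda>i. relu (z i)) else z)"

definition realization :: "nat \<Rightarrow> (nat \<Rightarrow> nat) \<Rightarrow> (nat \<Rightarrow> nat \<Rightarrow> nat \<Rightarrow> real)
    \<Rightarrow> (nat \<Rightarrow> nat \<Rightarrow> real) \<Rightarrow> (nat \<Rightarrow> real) \<Rightarrow> (nat \<Rightarrow> real)" where
  "realization L N W b x = nn_state L N W b x L"

definition lq_norm :: "ereal \<Rightarrow> 'a set \<Rightarrow> ('a \<Rightarrow> real) \<Rightarrow> real" where
  "lq_norm q A f =
     (if q = \<infinity> then (if A = {} then 0 else Max ((\<lambda>a. \<bar>f a\<bar>) ` A))
      else (\<Sum>a\<in>A. \<bar>f a\<bar> powr real_of_ereal q) powr (1 / real_of_ereal q))"

definition mat_lq_norm :: "ereal \<Rightarrow> nat \<Rightarrow> nat \<Rightarrow> (nat \<Rightarrow> nat \<Rightarrow> real) \<Rightarrow> real" where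
  "mat_lq_norm q m n A = lq_norm q ({..<m} \<times> {..<n}) (\<lambda>(i,j). A i j)"

definition vec_lq_norm :: "ereal \<Rightarrow> nat \<Rightarrow> (nat \<Rightarrow> real) \<Rightarrow> real" where
  "vec_lq_norm q m v = lq_norm q {..<m} v"

definition net_lq_norm :: "ereal \<Rightarrow> nat \<Rightarrow> (nat \<Rightarrow> nat) \<Rightarrow> (nat \<Rightarrow> nat \<Rightarrow> nat \<Rightarrow> real)
    \<Rightarrow> (nat \<Rightarrow> nat \<Rightarrow> real) \<Rightarrow> real" where
  "net_lq_norm q L N W b =
     Max ((\<lambda>i. max (mat_lq_norm q (N i) (N (i - 1)) (W i)) (vec_lq_norm q (N i) (b i))) ` {1..L})"

definition l2norm :: "nat \<Rightarrow> (nat \<Rightarrow> real) \<Rightarrow> real" where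
  "l2norm n x = sqrt (\<Sum>i<n. (x i)\<^sup>2)"

definition lip_l2 :: "nat \<Rightarrow> nat \<Rightarrow> ((nat \<Rightarrow> real) \<Rightarrow> (nat \<Rightarrow> real)) \<Rightarrow> ereal" where
  "lip_l2 d k f = Sup {ereal (l2norm k (\<lambda>i. f x i - f y i) / l2norm d (\<lambda>i. x i - y i)) | x y.
                        x \<in> vecspace d \<and> y \<in> vecspace d \<and> x \<noteq> y}"

definition lip_exponent :: "ereal \<Rightarrow> real" where
  "lip_exponent q = (if q = \<infinity> then 1 else 1 - 2 / real_of_ereal q)"

end

theory Submission
  imports Defs
begin

text \<open>Every layer \<open>x \<mapsto> \<rho>(W x + b)\<close> is Lipschitz for \<open>\<ell>\<^sup>2\<close> with constant the Frobenius
norm \<open>\<parallel>W\<parallel>\<^sub>F\<close> of its weight matrix: the bias cancels in differences, \<open>\<rho>\<close> is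
1-Lipschitz in each coordinate, and Cauchy-Schwarz gives \<open>\<parallel>W d\<parallel>\<^sub>2 \<le> \<parallel>W\<parallel>\<^sub>F \<parallel>d\<parallel>\<^sub>2\<close>.
Hence \<open>Lip(R(\<Phi>)) \<le> \<Prod>\<^sub>i \<parallel>W\<^sup>i\<parallel>\<^sub>F\<close>. On the \<open>n = N\<^sub>i N\<^sub>i\<^sub>-\<^sub>1\<close> entries of \<open>W\<^sup>i\<close> the \<open>\<ell>\<^sup>2\<close> norm is
at most the \<open>\<ell>\<^sup>q\<close> norm for \<open>q \<le> 2\<close>, and at most \<open>n\<^sup>1\<^sup>/\<^sup>2\<^sup>-\<^sup>1\<^sup>/\<^sup>q\<close> times it for \<open>q \<ge> 2\<close>;
the product of the \<open>N\<^sub>i N\<^sub>i\<^sub>-\<^sub>1\<close> telescopes to \<open>N\<^sub>0 N\<^sub>L (N\<^sub>1 \<cdots> N\<^sub>L\<^sub>-\<^sub>1)\<^sup>2\<close>.\<close>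

lemma le_powr_div_plus:
  fixes t r :: real
  assumes "t \<ge> 0" "r \<ge> 1"
  shows "t \<le> t powr r / r + (1 - 1/r)"
proof (cases "t = 0")
  case True
  then show ?thesis using assms by simp
next
  case False
  have "(t powr r) powr (1/r) * 1 powr (1 - 1/r) \<le> (1/r) * t powr r + (1 - 1/r) * 1"
    by (rule Youngs_inequality_0) (use assms False in auto)
  then show ?thesis using assms False by (simp add: powr_powr)
qed

lemma sqrt_sum_squares_le_lp:
  fixes f :: "'a \<Rightarrow> real" and p :: real
  assumes "finite S" and "1 \<le> p" and "p \<le> 2"
  shows "sqrt (\<Sum>a\<in>S. (f a)\<^sup>2) \<le> (\<Sum>a\<in>S. \<bar>f a\<bar> powr p) powr (1/p)"
proof -
  define M where "M = (\<Sum>a\<in>S. \<bar>f a\<bar> powr p) powr (1/p)"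
  show ?thesis
  proof (cases "M = 0")
    case True
    then have "\<forall>a\<in>S. f a = 0"
      using \<open>finite S\<close> by (simp add: M_def sum_nonneg_eq_0_iff)
    then show ?thesis by simp
  next
    case False
    then have "M > 0" by (simp add: M_def)
    have M_powr: "M powr p = (\<Sum>a\<in>S. \<bar>f a\<bar> powr p)"
      using \<open>1 \<le> p\<close> by (simp add: M_def powr_powr sum_nonneg)
    \<comment> \<open>after normalisation every entry lies in \<open>[0,1]\<close>, where \<open>t\<^sup>2 \<le> t\<^sup>p\<close>\<close>
    have "(\<bar>f a\<bar> / M)\<^sup>2 \<le> (\<bar>f a\<bar> / M) powr p" if "a \<in> S" for a
    proof -
      have "\<bar>f a\<bar> powr p \<le> M powr p"
        unfolding M_powr using \<open>finite S\<close> that by (intro member_le_sum) auto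
      then have "\<bar>f a\<bar> \<le> M"
        using powr_less_mono2[of p M "\<bar>f a\<bar>"] \<open>1 \<le> p\<close> \<open>M > 0\<close> by force
      then have "(\<bar>f a\<bar> / M) powr 2 \<le> (\<bar>f a\<bar> / M) powr p"
        using \<open>M > 0\<close> \<open>p \<le> 2\<close> by (intro powr_mono') auto
      then show ?thesis using \<open>M > 0\<close> by simp
    qed
    then have "(\<Sum>a\<in>S. (\<bar>f a\<bar> / M)\<^sup>2) \<le> (\<Sum>a\<in>S. (\<bar>f a\<bar> / M) powr p)"
      by (rule sum_mono)
    also have "\<dots> = M powr p / M powr p"
      using \<open>M > 0\<close> by (simp add: M_powr powr_divide flip: sum_divide_distrib)
    also have "\<dots> = 1"
      using \<open>M > 0\<close> by simp
    finally have "(\<Sum>a\<in>S. (f a)\<^sup>2) \<le> M\<^sup>2"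
      using \<open>M > 0\<close> by (simp add: power_divide flip: sum_divide_distrib)
    then have "sqrt (\<Sum>a\<in>S. (f a)\<^sup>2) \<le> M"
      using \<open>M > 0\<close> real_sqrt_le_mono by fastforce
    then show ?thesis by (simp add: M_def)
  qed
qed

lemma sqrt_sum_squares_le_card_lp:
  fixes f :: "'a \<Rightarrow> real" and p :: real
  assumes "finite S" and "2 \<le> p"
  shows "sqrt (\<Sum>a\<in>S. (f a)\<^sup>2) \<le> real (card S) powr (1/2 - 1/p) * (\<Sum>a\<in>S. \<bar>f a\<bar> powr p) powr (1/p)"
proof -
  define T where "T = (\<Sum>a\<in>S. \<bar>f a\<bar> powr p)"
  define n where "n = real (card S)"
  show ?thesis
  proof (cases "T = 0")
    case True
    then have "\<forall>a\<in>S. f a = 0"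
      using \<open>finite S\<close> by (simp add: T_def sum_nonneg_eq_0_iff)
    then show ?thesis by simp
  next
    case False
    then have "T > 0" by (simp add: T_def order_le_neq_trans sum_nonneg)
    moreover from False have "S \<noteq> {}" by (auto simp: T_def)
    ultimately have "n > 0" using \<open>finite S\<close> by (simp add: n_def card_gt_0_iff)
    \<comment> \<open>normalise to \<open>\<ell>\<^sup>p\<close>-mean 1 and apply Young's inequality \<open>t \<le> t\<^sup>r/r + 1 - 1/r\<close>
        with \<open>r = p/2\<close> to each \<open>t = (f a/M)\<^sup>2\<close>\<close>
    define M where "M = (T / n) powr (1/p)"
    define r where "r = p / 2"
    have "M > 0" using \<open>T > 0\<close> \<open>n > 0\<close> by (simp add: M_def)
    have M_powr: "M powr p = T / n"
      using \<open>T > 0\<close> \<open>n > 0\<close> \<open>2 \<le> p\<close> by (simp add: M_def powr_powr)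
    have "r \<ge> 1" using \<open>2 \<le> p\<close> by (simp add: r_def)
    have powr_r: "((f a)\<^sup>2 / M\<^sup>2) powr r = \<bar>f a\<bar> powr p / M powr p" for a
    proof -
      have "((f a)\<^sup>2 / M\<^sup>2) powr r = ((\<bar>f a\<bar> / M) powr 2) powr r"
        using \<open>M > 0\<close> by (simp add: power_divide)
      also have "\<dots> = (\<bar>f a\<bar> / M) powr p"
        by (simp add: powr_powr r_def)
      also have "\<dots> = \<bar>f a\<bar> powr p / M powr p"
        using \<open>M > 0\<close> by (simp add: powr_divide)
      finally show ?thesis .
    qed
    have "(\<Sum>a\<in>S. (f a)\<^sup>2 / M\<^sup>2) \<le> (\<Sum>a\<in>S. ((f a)\<^sup>2 / M\<^sup>2) powr r / r + (1 - 1/r))"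
      using \<open>r \<ge> 1\<close> by (intro sum_mono le_powr_div_plus) auto
    also have "\<dots> = T / M powr p / r + n * (1 - 1/r)"
      by (simp add: powr_r sum.distrib T_def n_def flip: sum_divide_distrib)
    also have "\<dots> = n"
      using M_powr \<open>M > 0\<close> \<open>n > 0\<close> \<open>r \<ge> 1\<close> by (simp add: field_simps)
    finally have "(\<Sum>a\<in>S. (f a)\<^sup>2) \<le> n * M\<^sup>2"
      using \<open>M > 0\<close> by (simp add: field_simps flip: sum_divide_distrib)
    then have "sqrt (\<Sum>a\<in>S. (f a)\<^sup>2) \<le> sqrt (n * M\<^sup>2)"
      by (rule real_sqrt_le_mono)
    also have "\<dots> = n powr (1/2) * M"
      using \<open>n > 0\<close> \<open>M > 0\<close> by (simp add: real_sqrt_mult powr_half_sqrt)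
    also have "\<dots> = n powr (1/2 - 1/p) * T powr (1/p)"
      using \<open>n > 0\<close> \<open>T > 0\<close> by (simp add: M_def powr_divide powr_diff)
    finally show ?thesis by (simp add: n_def T_def)
  qed
qed

lemma sqrt_sum_squares_le_sqrt_card_Max:
  fixes f :: "'a \<Rightarrow> real"
  assumes "finite S" and "S \<noteq> {}"
  shows "sqrt (\<Sum>a\<in>S. (f a)\<^sup>2) \<le> sqrt (real (card S)) * Max ((\<lambda>a. \<bar>f a\<bar>) ` S)"
proof -
  define M where "M = Max ((\<lambda>a. \<bar>f a\<bar>) ` S)"
  have le_M: "\<bar>f a\<bar> \<le> M" if "a \<in> S" for a
    using \<open>finite S\<close> that by (simp add: M_def)
  then have "M \<ge> 0" using \<open>S \<noteq> {}\<close> by (meson abs_ge_zero ex_in_conv order_trans)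
  have "(\<Sum>a\<in>S. (f a)\<^sup>2) \<le> (\<Sum>a\<in>S. M\<^sup>2)"
    using le_M by (intro sum_mono) (metis abs_ge_zero power2_abs power_mono)
  then have "sqrt (\<Sum>a\<in>S. (f a)\<^sup>2) \<le> sqrt (real (card S) * M\<^sup>2)"
    by (intro real_sqrt_le_mono) simp
  also have "\<dots> = sqrt (real (card S)) * M"
    using \<open>M \<ge> 0\<close> by (simp add: real_sqrt_mult)
  finally show ?thesis by (simp add: M_def)
qed

lemma sqrt_sum_squares_le_lq_norm:
  fixes f :: "'a \<Rightarrow> real"
  assumes "finite A" and "1 \<le> q" and "q \<le> 2"
  shows "sqrt (\<Sum>a\<in>A. (f a)\<^sup>2) \<le> lq_norm q A f"
proof -
  obtain p where "q = ereal p" using assms by (cases q) auto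
  then show ?thesis
    using assms by (simp add: lq_norm_def sqrt_sum_squares_le_lp)
qed

lemma sqrt_sum_squares_le_card_powr_lq_norm:
  fixes f :: "'a \<Rightarrow> real"
  assumes "finite A" and "2 \<le> q"
  shows "sqrt (\<Sum>a\<in>A. (f a)\<^sup>2) \<le> real (card A) powr (lip_exponent q / 2) * lq_norm q A f"
proof (cases q)
  case (real p)
  then show ?thesis
    using assms sqrt_sum_squares_le_card_lp[of A p f]
    by (simp add: lq_norm_def lip_exponent_def diff_divide_distrib)
next
  case PInf
  then show ?thesis
    using assms sqrt_sum_squares_le_sqrt_card_Max[of A f]
    by (cases "A = {}") (simp_all add: lq_norm_def lip_exponent_def powr_half_sqrt)
next
  case MInf
  with assms show ?thesis by simp
qed

definition frobenius_norm :: "nat \<Rightarrow> nat \<Rightarrow> (nat \<Rightarrow> nat \<Rightarrow> real) \<Rightarrow> real" where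
  "frobenius_norm m n A = sqrt (\<Sum>i<m. \<Sum>j<n. (A i j)\<^sup>2)"

lemma frobenius_norm_nonneg: "frobenius_norm m n A \<ge> 0"
  by (simp add: frobenius_norm_def sum_nonneg)

lemma frobenius_norm_eq_sqrt_sum_entries:
  "frobenius_norm m n A = sqrt (\<Sum>e\<in>{..<m} \<times> {..<n}. ((\<lambda>(i, j). A i j) e)\<^sup>2)"
  by (simp add: frobenius_norm_def sum.cartesian_product case_prod_beta)

lemma frobenius_norm_le_mat_lq_norm:
  assumes "1 \<le> q" and "q \<le> 2"
  shows "frobenius_norm m n A \<le> mat_lq_norm q m n A"
  unfolding frobenius_norm_eq_sqrt_sum_entries mat_lq_norm_def
  using assms by (intro sqrt_sum_squares_le_lq_norm) auto

lemma frobenius_norm_le_card_powr_mat_lq_norm: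
  assumes "2 \<le> q"
  shows "frobenius_norm m n A \<le> real (m * n) powr (lip_exponent q / 2) * mat_lq_norm q m n A"
  unfolding frobenius_norm_eq_sqrt_sum_entries mat_lq_norm_def
  using sqrt_sum_squares_le_card_powr_lq_norm[OF _ assms, of "{..<m} \<times> {..<n}"]
  by (simp add: card_cartesian_product)

lemma l2norm_mono:
  assumes "\<And>i. i < m \<Longrightarrow> \<bar>u i\<bar> \<le> \<bar>v i\<bar>"
  shows "l2norm m u \<le> l2norm m v"
  unfolding l2norm_def using assms
  by (intro real_sqrt_le_mono sum_mono) (simp add: abs_le_square_iff)

lemma l2norm_matrix_vector_le:
  "l2norm m (\<lambda>i. \<Sum>j<n. A i j * d j) \<le> frobenius_norm m n A * l2norm n d"
proof -
  have "(\<Sum>i<m. (\<Sum>j<n. A i j * d j)\<^sup>2) \<le> (\<Sum>i<m. (\<Sum>j<n. (A i j)\<^sup>2) * (\<Sum>j<n. (d j)\<^sup>2))"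
    by (intro sum_mono Cauchy_Schwarz_ineq_sum)
  then have "sqrt (\<Sum>i<m. (\<Sum>j<n. A i j * d j)\<^sup>2) \<le> sqrt ((\<Sum>i<m. \<Sum>j<n. (A i j)\<^sup>2) * (\<Sum>j<n. (d j)\<^sup>2))"
    by (simp add: sum_distrib_right)
  then show ?thesis
    by (simp add: l2norm_def frobenius_norm_def real_sqrt_mult)
qed

lemma abs_relu_diff_le: "\<bar>relu s - relu t\<bar> \<le> \<bar>s - t\<bar>"
  unfolding relu_def by linarith

lemma affine_map_diff:
  assumes "i < m"
  shows "affine_map A v n m x i - affine_map A v n m y i = (\<Sum>j<n. A i j * (x j - y j))"
  using assms by (simp add: affine_map_def right_diff_distrib sum_subtractf)

lemma nn_state_Suc_dist_le:
  "l2norm (N (Suc k)) (\<lambda>i. nn_state L N W b x (Suc k) i - nn_state L N W b y (Suc k) i)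
   \<le> frobenius_norm (N (Suc k)) (N k) (W (Suc k))
       * l2norm (N k) (\<lambda>j. nn_state L N W b x k j - nn_state L N W b y k j)"
proof -
  let ?d = "\<lambda>j. nn_state L N W b x k j - nn_state L N W b y k j"
  let ?z = "\<lambda>x. affine_map (W (Suc k)) (b (Suc k)) (N k) (N (Suc k)) (nn_state L N W b x k)"
  have "\<bar>nn_state L N W b x (Suc k) i - nn_state L N W b y (Suc k) i\<bar>
        \<le> \<bar>\<Sum>j<N k. W (Suc k) i j * ?d j\<bar>" if "i < N (Suc k)" for i
  proof -
    have "\<bar>nn_state L N W b x (Suc k) i - nn_state L N W b y (Suc k) i\<bar> \<le> \<bar>?z x i - ?z y i\<bar>"
      by (cases "Suc k < L") (simp_all add: Let_def abs_relu_diff_le)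
    also have "?z x i - ?z y i = (\<Sum>j<N k. W (Suc k) i j * ?d j)"
      by (rule affine_map_diff[OF that])
    finally show ?thesis .
  qed
  then have "l2norm (N (Suc k)) (\<lambda>i. nn_state L N W b x (Suc k) i - nn_state L N W b y (Suc k) i)
        \<le> l2norm (N (Suc k)) (\<lambda>i. \<Sum>j<N k. W (Suc k) i j * ?d j)"
    by (rule l2norm_mono)
  also have "\<dots> \<le> frobenius_norm (N (Suc k)) (N k) (W (Suc k)) * l2norm (N k) ?d"
    by (rule l2norm_matrix_vector_le)
  finally show ?thesis .
qed

lemma nn_state_dist_le:
  "l2norm (N k) (\<lambda>i. nn_state L N W b x k i - nn_state L N W b y k i)
   \<le> (\<Prod>i\<in>{1..k}. frobenius_norm (N i) (N (i-1)) (W i)) * l2norm (N 0) (\<lambda>i. x i - y i)"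
proof (induction k)
  case 0
  have "l2norm (N 0) (\<lambda>i. nn_state L N W b x 0 i - nn_state L N W b y 0 i) = l2norm (N 0) (\<lambda>i. x i - y i)"
    unfolding l2norm_def by (intro arg_cong[where f = sqrt] sum.cong) auto
  then show ?case by simp
next
  case (Suc k)
  let ?F = "\<lambda>i. frobenius_norm (N i) (N (i-1)) (W i)"
  have "l2norm (N (Suc k)) (\<lambda>i. nn_state L N W b x (Suc k) i - nn_state L N W b y (Suc k) i)
        \<le> ?F (Suc k) * l2norm (N k) (\<lambda>i. nn_state L N W b x k i - nn_state L N W b y k i)"
    using nn_state_Suc_dist_le by simp
  also have "\<dots> \<le> ?F (Suc k) * ((\<Prod>i\<in>{1..k}. ?F i) * l2norm (N 0) (\<lambda>i. x i - y i))"
    by (intro mult_left_mono Suc.IH frobenius_norm_nonneg)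
  also have "\<dots> = (\<Prod>i\<in>{1..Suc k}. ?F i) * l2norm (N 0) (\<lambda>i. x i - y i)"
    by simp
  finally show ?case .
qed

lemma lip_l2_le:
  assumes "\<And>x y. l2norm k (\<lambda>i. f x i - f y i) \<le> K * l2norm d (\<lambda>i. x i - y i)"
  shows "lip_l2 d k f \<le> ereal K"
  unfolding lip_l2_def
proof (rule Sup_least, clarify)
  fix x y assume x: "x \<in> vecspace d" and y: "y \<in> vecspace d" and "x \<noteq> y"
  then obtain i where "x i \<noteq> y i" by auto
  moreover have "i < d"
  proof (rule ccontr)
    assume "\<not> i < d"
    with x y have "x i = 0" "y i = 0" by (auto simp: vecspace_def)
    with \<open>x i \<noteq> y i\<close> show False by simp
  qed
  ultimately have "0 < (\<Sum>j<d. (x j - y j)\<^sup>2)"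
    by (intro sum_pos2[of _ i]) auto
  then have "l2norm d (\<lambda>i. x i - y i) > 0" by (simp add: l2norm_def)
  then show "ereal (l2norm k (\<lambda>i. f x i - f y i) / l2norm d (\<lambda>i. x i - y i)) \<le> ereal K"
    using assms[of x y] by (simp add: pos_divide_le_eq)
qed

lemma lip_l2_realization_le_prod_frobenius_norm:
  "lip_l2 (N 0) (N L) (realization L N W b)
   \<le> ereal (\<Prod>i\<in>{1..L}. frobenius_norm (N i) (N (i-1)) (W i))"
  unfolding realization_def by (intro lip_l2_le nn_state_dist_le)

lemma mat_lq_norm_le_net_lq_norm:
  assumes "i \<in> {1..L}"
  shows "mat_lq_norm q (N i) (N (i-1)) (W i) \<le> net_lq_norm q L N W b"
proof -
  have "max (mat_lq_norm q (N i) (N (i-1)) (W i)) (vec_lq_norm q (N i) (b i)) \<le> net_lq_norm q L N W b"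
    unfolding net_lq_norm_def using assms by (intro Max_ge) auto
  then show ?thesis by simp
qed

lemma prod_consecutive_widths:
  fixes N :: "nat \<Rightarrow> nat"
  assumes "L \<ge> 1"
  shows "(\<Prod>i\<in>{1..L}. real (N i * N (i-1))) = real (N 0 * N L) * (\<Prod>i\<in>{1..L-1}. real (N i))\<^sup>2"
proof -
  obtain K where L: "L = Suc K" using assms by (cases L) auto
  have "(\<Prod>i\<in>{1..L}. real (N (i-1))) = (\<Prod>i\<in>{0..K}. real (N i))"
    unfolding L One_nat_def prod.shift_bounds_cl_Suc_ivl by simp
  also have "\<dots> = real (N 0) * (\<Prod>i\<in>{1..L-1}. real (N i))"
    by (simp add: L prod.atLeast_Suc_atMost)
  moreover have "(\<Prod>i\<in>{1..L}. real (N i)) = (\<Prod>i\<in>{1..L-1}. real (N i)) * real (N L)"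
    by (simp add: L)
  ultimately show ?thesis
    by (simp add: prod.distrib power2_eq_square)
qed

lemma prod_consecutive_widths_powr:
  fixes N :: "nat \<Rightarrow> nat"
  assumes "L \<ge> 1"
  shows "(\<Prod>i\<in>{1..L}. real (N i * N (i-1)) powr (e/2))
       = (sqrt (real (N 0 * N L)) * (\<Prod>i\<in>{1..L-1}. real (N i))) powr e"
proof -
  define Q where "Q = (\<Prod>i\<in>{1..L-1}. real (N i))"
  have "Q \<ge> 0" by (simp add: Q_def prod_nonneg)
  have "(\<Prod>i\<in>{1..L}. real (N i * N (i-1)) powr (e/2)) = (real (N 0 * N L) * Q\<^sup>2) powr (e/2)"
    unfolding prod_powr_distrib[symmetric] prod_consecutive_widths[OF assms] Q_def ..
  also have "\<dots> = sqrt (real (N 0 * N L) * Q\<^sup>2) powr e"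
    by (simp add: powr_half_sqrt[symmetric] powr_powr)
  also have "\<dots> = (sqrt (real (N 0 * N L)) * Q) powr e"
    using \<open>Q \<ge> 0\<close> by (simp add: real_sqrt_mult)
  finally show ?thesis by (simp add: Q_def)
qed

lemma prod_frobenius_norm_le:
  assumes "1 \<le> q" and "q \<le> 2" and "net_lq_norm q L N W b \<le> c"
  shows "(\<Prod>i\<in>{1..L}. frobenius_norm (N i) (N (i-1)) (W i)) \<le> c ^ L"
proof -
  let ?F = "\<lambda>i. frobenius_norm (N i) (N (i-1)) (W i)"
  have "?F i \<le> c" if "i \<in> {1..L}" for i
    using frobenius_norm_le_mat_lq_norm[OF assms(1,2)] mat_lq_norm_le_net_lq_norm[OF that] assms(3)
    by (blast intro: order_trans)
  then have "(\<Prod>i\<in>{1..L}. ?F i) \<le> (\<Prod>i\<in>{1..L}. c)"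
    by (intro prod_mono) (simp add: frobenius_norm_nonneg)
  then show ?thesis by simp
qed

lemma prod_frobenius_norm_le_widths:
  fixes N :: "nat \<Rightarrow> nat"
  assumes "L \<ge> 1" and "2 \<le> q" and "net_lq_norm q L N W b \<le> c"
  shows "(\<Prod>i\<in>{1..L}. frobenius_norm (N i) (N (i-1)) (W i))
         \<le> c ^ L * (sqrt (real (N 0 * N L)) * (\<Prod>i\<in>{1..L-1}. real (N i))) powr lip_exponent q"
proof -
  let ?F = "\<lambda>i. frobenius_norm (N i) (N (i-1)) (W i)"
  let ?g = "\<lambda>i. real (N i * N (i-1)) powr (lip_exponent q / 2)"
  have "?F i \<le> ?g i * c" if "i \<in> {1..L}" for i
    using frobenius_norm_le_card_powr_mat_lq_norm[OF assms(2)]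
      mult_left_mono[OF order_trans[OF mat_lq_norm_le_net_lq_norm[OF that] assms(3)], of "?g i"]
    by (rule order_trans) simp
  then have "(\<Prod>i\<in>{1..L}. ?F i) \<le> (\<Prod>i\<in>{1..L}. ?g i * c)"
    by (intro prod_mono) (simp add: frobenius_norm_nonneg)
  also have "\<dots> = (\<Prod>i\<in>{1..L}. ?g i) * c ^ L"
    by (simp only: prod.distrib prod_constant card_atLeastAtMost) simp
  also have "(\<Prod>i\<in>{1..L}. ?g i)
      = (sqrt (real (N 0 * N L)) * (\<Prod>i\<in>{1..L-1}. real (N i))) powr lip_exponent q"
    by (rule prod_consecutive_widths_powr[OF assms(1)])
  finally show ?thesis by (simp only: mult.commute)
qed

theorem lemma2p8:
  fixes L :: nat and N :: "nat \<Rightarrow> nat" and q :: ereal and c :: real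
    and W :: "nat \<Rightarrow> nat \<Rightarrow> nat \<Rightarrow> real" and b :: "nat \<Rightarrow> nat \<Rightarrow> real"
  assumes "L \<ge> 1" and "1 \<le> q" and "c > 0"
    and "net_lq_norm q L N W b \<le> c"
  shows "(q \<le> 2 \<longrightarrow> lip_l2 (N 0) (N L) (realization L N W b) \<le> ereal (c ^ L))
       \<and> (q \<ge> 2 \<longrightarrow> lip_l2 (N 0) (N L) (realization L N W b)
             \<le> ereal (c ^ L * (sqrt (real (N 0 * N L)) * (\<Prod>i\<in>{1..L-1}. real (N i)))
                              powr lip_exponent q))"
proof -
  have lip: "lip_l2 (N 0) (N L) (realization L N W b)
             \<le> ereal (\<Prod>i\<in>{1..L}. frobenius_norm (N i) (N (i-1)) (W i))"
    by (rule lip_l2_realization_le_prod_frobenius_norm)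
  show ?thesis
    using order_trans[OF lip] prod_frobenius_norm_le[OF assms(2) _ assms(4)]
      prod_frobenius_norm_le_widths[OF assms(1) _ assms(4)]
    by auto
qed

end
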